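(* Let $a\in(-1,0)$ and $\alpha\in\mathbb{R}$, and let $$P_1(x)=a x_1+x_2+\tfrac32 a x_1x_2+\tfrac32 x_2^2+\alpha x_1,\qquad P_2(x)=x_1+a x_2+a x_2^2 .$$ For every $\mathcal{T}\in\mathbb{R}^2$ such that the translated homoclinic orbit $\{x+\mathcal{T}:\ -x_1^2+x_2^2(1+x_2)=0,\ x_2<0\}$ is contained in $\mathbb{R}_{>}^2$, the translated polynomial map $\bar x\mapsto P(\bar x-\mathcal{T})$, considered on $\mathbb{R}_{\ge}^2$, is nonkinetic, i.e. it contains a cross-negative term.
   Context: $\mathbb{R}_{>}^2$ is the open positive quadrant. For a polynomial map $F=(F_1,F_2)$ written as a sum of monomials, a term of $F_s$ is cross-negative if it is a monomial with negative coefficient not containing the factor $\bar x_s$ (so it is negative at some nonnegative point with $\bar x_s=0$); $F$ is nonkinetic if it has at least one cross-negative term. *)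

theory Defs
  imports Complex_Main
begin

text \<open>A real polynomial in two variables, written as a sum of monomials, is represented
  by its coefficient function c :: nat \<times> nat \<Rightarrow> real with finite support:
  c (i,j) is the coefficient of the monomial x1^i * x2^j.\<close>

definition poly2_support :: "(nat \<times> nat \<Rightarrow> real) \<Rightarrow> (nat \<times> nat) set" where
  "poly2_support c = {m. c m \<noteq> 0}"

definition eval_poly2 :: "(nat \<times> nat \<Rightarrow> real) \<Rightarrow> real \<Rightarrow> real \<Rightarrow> real" where
  "eval_poly2 c x1 x2 = (\<Sum>m\<in>poly2_support c. c m * x1 ^ fst m * x2 ^ snd m)"

definition cross_negative_term :: "nat \<Rightarrow> (nat \<times> nat \<Rightarrow> real) \<Rightarrow> nat \<times> nat \<Rightarrow> bool" where
  "cross_negative_term s c m \<longleftrightarrow> c m < 0 \<and> (if s = 1 then fst m = 0 else snd m = 0)"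

definition nonkinetic2 :: "(nat \<times> nat \<Rightarrow> real) \<Rightarrow> (nat \<times> nat \<Rightarrow> real) \<Rightarrow> bool" where
  "nonkinetic2 c1 c2 \<longleftrightarrow> (\<exists>m. cross_negative_term 1 c1 m) \<or> (\<exists>m. cross_negative_term 2 c2 m)"

definition P1 :: "real \<Rightarrow> real \<Rightarrow> real \<Rightarrow> real \<Rightarrow> real" where
  "P1 a \<alpha> x1 x2 = a * x1 + x2 + 3/2 * a * x1 * x2 + 3/2 * x2^2 + \<alpha> * x1"

definition P2 :: "real \<Rightarrow> real \<Rightarrow> real \<Rightarrow> real" where
  "P2 a x1 x2 = x1 + a * x2 + a * x2^2"

end

theory Submission
  imports Defs
begin

text \<open>The homoclinic orbit passes through (0,-1), so its translate lies in the open quadrant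
  only if T1 > 0 and T2 > 1. The constant term of the translated P2 is then
  P2(-T1,-T2) = -T1 + a T2 (T2 - 1) < 0; a constant monomial contains no factor x2,
  so it is a cross-negative term of the second component.\<close>

lemma eval_poly2_0_0:
  assumes "finite (poly2_support c)"
  shows "eval_poly2 c 0 0 = c (0, 0)"
proof -
  have "eval_poly2 c 0 0 = (\<Sum>m\<in>poly2_support c. if m = (0, 0) then c m else 0)"
    unfolding eval_poly2_def by (rule sum.cong) (auto simp: power_0_left split: prod.splits)
  also have "\<dots> = c (0, 0)"
    using assms by (simp add: sum.delta poly2_support_def)
  finally show ?thesis .
qed

lemma cross_negative_term_constant:
  "cross_negative_term s c (0, 0) \<longleftrightarrow> c (0, 0) < 0"
  by (simp add: cross_negative_term_def)

lemma P2_neg_translate_neg: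
  fixes a T1 T2 :: real
  assumes "a < 0" and "T1 > 0" and "T2 > 1"
  shows "P2 a (- T1) (- T2) < 0"
proof -
  have "a * (T2 * (T2 - 1)) < 0"
    using assms by (simp add: mult_neg_pos)
  moreover have "P2 a (- T1) (- T2) = - T1 + a * (T2 * (T2 - 1))"
    by (simp add: P2_def power2_eq_square algebra_simps)
  ultimately show ?thesis
    using \<open>T1 > 0\<close> by linarith
qed

theorem lemma2:
  fixes a \<alpha> T1 T2 :: real and c1 c2 :: "nat \<times> nat \<Rightarrow> real"
  assumes "-1 < a" and "a < 0"
    and homoclinic_pos: "\<forall>x1 x2. - (x1^2) + x2^2 * (1 + x2) = 0 \<and> x2 < 0
                           \<longrightarrow> x1 + T1 > 0 \<and> x2 + T2 > 0"
    and "finite (poly2_support c1)" and "finite (poly2_support c2)"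
    and "\<forall>y1 y2. eval_poly2 c1 y1 y2 = P1 a \<alpha> (y1 - T1) (y2 - T2)"
    and "\<forall>y1 y2. eval_poly2 c2 y1 y2 = P2 a (y1 - T1) (y2 - T2)"
  shows "nonkinetic2 c1 c2"
proof -
  have "T1 > 0" and "T2 > 1"
    using homoclinic_pos[rule_format, of 0 "-1"] by simp_all
  have "c2 (0, 0) = P2 a (- T1) (- T2)"
    using assms(7) eval_poly2_0_0[OF assms(5)] by (metis diff_0)
  also have "\<dots> < 0"
    using P2_neg_translate_neg[OF \<open>a < 0\<close> \<open>T1 > 0\<close> \<open>T2 > 1\<close>] .
  finally have "cross_negative_term 2 c2 (0, 0)"
    by (simp add: cross_negative_term_constant)
  then show ?thesis
    unfolding nonkinetic2_def by blast
qed

end
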